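(* Consider the DS-PSRL algorithm run on a weakly communicating parametrized MDP whose differential value functions satisfy $h(x,\theta)\in[0,H]$ for all $x,\theta$. Then the Bayes regret satisfies \[ R_T=\sum_{t=1}^T\mathbb{E}\big[\ell(x_t,a_t)-J(\theta_* )\big]\le H\sum_{t=1}^T\mathbb{E}[\mathbf{1}\{A_t\}]+\sum_{t=1}^T\mathbb{E}\big[h_t(x_{t+1})-h_t(\widetilde x_{t+1})\big]+H, \] where $A_t$ is the event that the algorithm changed its policy at time $t$.
   Context: Setting: parametrized MDP $(\mathcal{X},\mathcal{A},\ell,P^{\theta_*})$ with unknown parameter $\theta_*\in\Theta\subseteq\mathbb{R}$ drawn from a known prior; transitions $P(\cdot\mid x,a,\theta)$ and loss $\ell$ known. $J(\theta)$ is the optimal average loss and $h(\cdot,\theta)$ the differential value function with parameter $\theta$, satisfying the Bellman equation $J(\theta)+h(x,\theta)=\min_a\{\ell(x,a)+\mathbb{E}_{y\sim P(\cdot\mid x,a,\theta)}h(y,\theta)\}$. DS-PSRL: set $L=1$; at each $t=1,2,\dots$, if $t=L$ sample $\widetilde\theta_t$ from the current posterior of $\theta_*$ and set $L\leftarrow2L$, else $\widetilde\theta_t=\widetilde\theta_{t-1}$; play $a_t=\pi^*(x_t,\widetilde\theta_t)$, an action of an optimal policy for parameter $\widetilde\theta_t$ (attaining the minimum in the Bellman equation); observe $x_{t+1}\sim P(\cdot\mid x_t,a_t,\theta_* )$ and update the posterior. Notation: $h_t(x)=h(x,\widetilde\theta_t)$; $\widetilde x_{t+1}\sim P(\cdot\mid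 x_t,a_t,\widetilde\theta_t)$ is an imaginary next state under the sampled parameter. *)

theory Defs
  imports "HOL-Probability.Probability"
begin

text \<open>DS-PSRL resampling schedule: starting with L = 1, a new parameter is sampled at
  time t iff t = L, after which L is doubled.\<close>
definition ds_sample_time :: "nat \<Rightarrow> bool" where
  "ds_sample_time t \<longleftrightarrow> (\<exists>k. t = 2 ^ k)"

definition policy_change_event :: "'w measure \<Rightarrow> nat \<Rightarrow> 'w set" where
  "policy_change_event M t = {\<omega> \<in> space M. ds_sample_time t}"

definition history ::
  "('x \<Rightarrow> real \<Rightarrow> 'a) \<Rightarrow> (nat \<Rightarrow> 'w \<Rightarrow> 'x) \<Rightarrow> (nat \<Rightarrow> 'w \<Rightarrow> real) \<Rightarrow> nat \<Rightarrow> 'w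
     \<Rightarrow> 'x list \<times> 'a list" where
  "history \<pi> x th t \<omega> =
     (map (\<lambda>s. x s \<omega>) [1..<Suc t], map (\<lambda>s. \<pi> (x s \<omega>) (th s \<omega>)) [1..<t])"

end

theory Submission
  imports Defs
begin

(* By the Bellman equation at the sampled parameter, the loss at time t equals
   J(theta_t) + h_t(x_t) - E[h_t(y)], y ~ P(. | x_t, a_t, theta_t).  Posterior sampling makes
   theta_t, which is the sample drawn at the last sampling time s <= t, equal in law to theta_*:
   summing the posterior identity over all histories identifies the two laws.  Hence
   E J(theta_t) = E J(theta_* ), and the conditional law of the imaginary state turns the
   inner expectation into E h_t(x~_(t+1)).  What remains of the regret is
   sum_t E[h_t(x_t) - h_t(x_(t+1))] + sum_t E[h_t(x_(t+1)) - h_t(x~_(t+1))]; the first sum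
   telescopes except at the sampling times, where h_t changes and each jump costs at most H. *)

lemma measurable_map_count_space [measurable]:
  fixes f :: "'i \<Rightarrow> 'w \<Rightarrow> 'a::countable"
  assumes [measurable]: "\<And>i. f i \<in> M \<rightarrow>\<^sub>M count_space UNIV"
  shows "(\<lambda>\<omega>. map (\<lambda>i. f i \<omega>) ns) \<in> M \<rightarrow>\<^sub>M count_space UNIV"
  by (induction ns) simp_all

lemma nn_integral_count_space_fiber_indicator:
  assumes "\<omega> \<in> space M"
  shows "(\<integral>\<^sup>+c. indicator {\<omega>\<in>space M. Z \<omega> = c} \<omega> * u c \<partial>count_space UNIV) = u (Z \<omega>)"
proof -
  have "(\<integral>\<^sup>+c. indicator {\<omega>\<in>space M. Z \<omega> = c} \<omega> * u c \<partial>count_space UNIV)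
      = (\<integral>\<^sup>+c. u (Z \<omega>) * indicator {Z \<omega>} c \<partial>count_space UNIV)"
    using assms by (intro nn_integral_cong) (auto split: split_indicator)
  also have "\<dots> = u (Z \<omega>)"
    by (simp add: nn_integral_cmult_indicator)
  finally show ?thesis .
qed

lemma nn_integral_eq_by_countable_fibers:
  fixes Z :: "'w \<Rightarrow> 'c::countable"
  assumes [measurable]: "Z \<in> M \<rightarrow>\<^sub>M count_space UNIV" "u \<in> borel_measurable M" "v \<in> borel_measurable M"
    and fibers: "\<And>c. (\<integral>\<^sup>+\<omega>. indicator {\<omega>\<in>space M. Z \<omega> = c} \<omega> * u \<omega> \<partial>M)
                    = (\<integral>\<^sup>+\<omega>. indicator {\<omega>\<in>space M. Z \<omega> = c} \<omega> * v \<omega> \<partial>M)"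
  shows "(\<integral>\<^sup>+\<omega>. u \<omega> \<partial>M) = (\<integral>\<^sup>+\<omega>. v \<omega> \<partial>M)"
proof -
  have split: "(\<integral>\<^sup>+\<omega>. w \<omega> \<partial>M)
      = (\<integral>\<^sup>+c. \<integral>\<^sup>+\<omega>. indicator {\<omega>\<in>space M. Z \<omega> = c} \<omega> * w \<omega> \<partial>M \<partial>count_space UNIV)"
    if [measurable]: "w \<in> borel_measurable M" for w :: "'w \<Rightarrow> ennreal"
  proof -
    have "(\<integral>\<^sup>+\<omega>. w \<omega> \<partial>M)
        = (\<integral>\<^sup>+\<omega>. \<integral>\<^sup>+c. indicator {\<omega>\<in>space M. Z \<omega> = c} \<omega> * w \<omega> \<partial>count_space UNIV \<partial>M)"
      by (intro nn_integral_cong) (simp add: nn_integral_count_space_fiber_indicator)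
    also have "\<dots> = (\<integral>\<^sup>+c. \<integral>\<^sup>+\<omega>. indicator {\<omega>\<in>space M. Z \<omega> = c} \<omega> * w \<omega> \<partial>M \<partial>count_space UNIV)"
      by (rule nn_integral_count_space_nn_integral) auto
    finally show ?thesis .
  qed
  show ?thesis
    by (simp add: split[of u] split[of v] fibers)
qed

lemma (in finite_measure) measure_eq_if_mult_eq:
  assumes "A \<subseteq> F" "B \<subseteq> F" "F \<in> sets M"
    and "measure M A * measure M F = measure M B * measure M F"
  shows "measure M A = measure M B"
proof (cases "measure M F = 0")
  case True
  then have "measure M A \<le> 0" "measure M B \<le> 0"
    using finite_measure_mono[OF assms(1,3)] finite_measure_mono[OF assms(2,3)] by simp_all
  then show ?thesis by (simp add: measure_le_0_iff)
next
  case False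
  then show ?thesis using assms(4) by simp
qed

lemma distr_eq_by_countable_fibers:
  fixes Z :: "'w \<Rightarrow> 'c::countable"
  assumes [measurable]: "Z \<in> M \<rightarrow>\<^sub>M count_space UNIV" "X \<in> M \<rightarrow>\<^sub>M N" "Y \<in> M \<rightarrow>\<^sub>M N"
    and fibers: "\<And>c A. A \<in> sets N \<Longrightarrow> emeasure M {\<omega>\<in>space M. X \<omega> \<in> A \<and> Z \<omega> = c}
                                     = emeasure M {\<omega>\<in>space M. Y \<omega> \<in> A \<and> Z \<omega> = c}"
  shows "distr M N X = distr M N Y"
proof (rule measure_eqI)
  fix A assume "A \<in> sets (distr M N X)"
  then have [measurable]: "A \<in> sets N" by simp
  have fiber_indicator: "(\<integral>\<^sup>+\<omega>. indicator {\<omega>\<in>space M. Z \<omega> = c} \<omega> * indicator (V -` A \<inter> space M) \<omega> \<partial>M)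
      = emeasure M {\<omega>\<in>space M. V \<omega> \<in> A \<and> Z \<omega> = c}"
    if [measurable]: "V \<in> M \<rightarrow>\<^sub>M N" for V c
  proof -
    have "(\<integral>\<^sup>+\<omega>. indicator {\<omega>\<in>space M. Z \<omega> = c} \<omega> * indicator (V -` A \<inter> space M) \<omega> \<partial>M)
        = (\<integral>\<^sup>+\<omega>. indicator {\<omega>\<in>space M. V \<omega> \<in> A \<and> Z \<omega> = c} \<omega> \<partial>M)"
      by (intro nn_integral_cong) (auto split: split_indicator)
    also have "\<dots> = emeasure M {\<omega>\<in>space M. V \<omega> \<in> A \<and> Z \<omega> = c}"
      by (rule nn_integral_indicator) measurable
    finally show ?thesis .
  qed
  have "(\<integral>\<^sup>+\<omega>. indicator (X -` A \<inter> space M) \<omega> \<partial>M) = (\<integral>\<^sup>+\<omega>. indicator (Y -` A \<inter> space M) \<omega> \<partial>M)"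
    by (rule nn_integral_eq_by_countable_fibers[of Z]) (simp_all add: fiber_indicator fibers)
  then show "emeasure (distr M N X) A = emeasure (distr M N Y) A"
    by (simp add: emeasure_distr)
qed simp

lemma (in prob_space) emeasure_eq_nn_integral_by_countable_fibers:
  fixes Z :: "'a \<Rightarrow> 'c::countable"
  assumes [measurable]: "Z \<in> M \<rightarrow>\<^sub>M count_space UNIV" "Measurable.pred M E" "Measurable.pred M F"
      "p \<in> borel_measurable M"
    and p_bounds: "\<And>\<omega>. 0 \<le> p \<omega>" "\<And>\<omega>. p \<omega> \<le> 1"
    and fibers: "\<And>c. measure M {\<omega>\<in>space M. Z \<omega> = c \<and> E \<omega>}
                    = (\<integral>\<omega>. indicator {\<omega>\<in>space M. Z \<omega> = c \<and> F \<omega>} \<omega> * p \<omega> \<partial>M)"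
  shows "emeasure M {\<omega>\<in>space M. E \<omega>} = (\<integral>\<^sup>+\<omega>. ennreal (p \<omega>) * indicator {\<omega>\<in>space M. F \<omega>} \<omega> \<partial>M)"
proof -
  have "(\<integral>\<^sup>+\<omega>. indicator {\<omega>\<in>space M. E \<omega>} \<omega> \<partial>M)
      = (\<integral>\<^sup>+\<omega>. ennreal (p \<omega>) * indicator {\<omega>\<in>space M. F \<omega>} \<omega> \<partial>M)"
  proof (rule nn_integral_eq_by_countable_fibers[of Z])
    fix c
    have "integrable M (\<lambda>\<omega>. indicator {\<omega>\<in>space M. Z \<omega> = c \<and> F \<omega>} \<omega> * p \<omega>)"
      by (rule integrable_const_bound[where B=1]) (auto simp: p_bounds split: split_indicator)
    then have "ennreal (\<integral>\<omega>. indicator {\<omega>\<in>space M. Z \<omega> = c \<and> F \<omega>} \<omega> * p \<omega> \<partial>M)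
        = (\<integral>\<^sup>+\<omega>. indicator {\<omega>\<in>space M. Z \<omega> = c} \<omega> * (ennreal (p \<omega>) * indicator {\<omega>\<in>space M. F \<omega>} \<omega>) \<partial>M)"
      by (subst nn_integral_eq_integral[symmetric])
         (auto simp: p_bounds intro!: nn_integral_cong split: split_indicator)
    moreover have "ennreal (measure M {\<omega>\<in>space M. Z \<omega> = c \<and> E \<omega>})
        = (\<integral>\<^sup>+\<omega>. indicator {\<omega>\<in>space M. Z \<omega> = c} \<omega> * indicator {\<omega>\<in>space M. E \<omega>} \<omega> \<partial>M)"
    proof -
      have "ennreal (measure M {\<omega>\<in>space M. Z \<omega> = c \<and> E \<omega>})
          = (\<integral>\<^sup>+\<omega>. indicator {\<omega>\<in>space M. Z \<omega> = c \<and> E \<omega>} \<omega> \<partial>M)"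
        by (simp add: emeasure_eq_measure[symmetric])
      also have "\<dots> = (\<integral>\<^sup>+\<omega>. indicator {\<omega>\<in>space M. Z \<omega> = c} \<omega> * indicator {\<omega>\<in>space M. E \<omega>} \<omega> \<partial>M)"
        by (intro nn_integral_cong) (auto split: split_indicator)
      finally show ?thesis .
    qed
    ultimately show "(\<integral>\<^sup>+\<omega>. indicator {\<omega>\<in>space M. Z \<omega> = c} \<omega> * indicator {\<omega>\<in>space M. E \<omega>} \<omega> \<partial>M)
        = (\<integral>\<^sup>+\<omega>. indicator {\<omega>\<in>space M. Z \<omega> = c} \<omega> * (ennreal (p \<omega>) * indicator {\<omega>\<in>space M. F \<omega>} \<omega>) \<partial>M)"
      by (simp add: fibers)
  qed measurable
  then show ?thesis by simp
qed

lemma nn_integral_cond_pmf: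
  fixes Y :: "'w \<Rightarrow> 'y::countable" and p :: "'w \<Rightarrow> 'y \<Rightarrow> ennreal"
    and \<phi> :: "'y \<Rightarrow> 'b \<Rightarrow> ennreal"
  assumes [measurable]: "Y \<in> M \<rightarrow>\<^sub>M count_space UNIV" "X \<in> M \<rightarrow>\<^sub>M N"
      "\<And>y. (\<lambda>\<omega>. p \<omega> y) \<in> borel_measurable M" "\<And>y. \<phi> y \<in> borel_measurable N"
    and joint: "\<And>D y. D \<in> sets N \<Longrightarrow> emeasure M {\<omega>\<in>space M. X \<omega> \<in> D \<and> Y \<omega> = y}
                    = (\<integral>\<^sup>+\<omega>. p \<omega> y * indicator {\<omega>\<in>space M. X \<omega> \<in> D} \<omega> \<partial>M)"
  shows "(\<integral>\<^sup>+\<omega>. \<phi> (Y \<omega>) (X \<omega>) \<partial>M) = (\<integral>\<^sup>+\<omega>. \<integral>\<^sup>+y. p \<omega> y * \<phi> y (X \<omega>) \<partial>count_space UNIV \<partial>M)"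
proof -
  have fiber: "(\<integral>\<^sup>+\<omega>. indicator {\<omega>\<in>space M. Y \<omega> = y} \<omega> * \<phi> y (X \<omega>) \<partial>M)
      = (\<integral>\<^sup>+\<omega>. p \<omega> y * \<phi> y (X \<omega>) \<partial>M)" for y
  proof -
    \<comment> \<open>X has the same law under M restricted to \<open>{Y = y}\<close> as under the density \<open>p _ y\<close>.\<close>
    define q :: "'w \<Rightarrow> ennreal" where "q \<omega> = indicator {\<omega>\<in>space M. Y \<omega> = y} \<omega>" for \<omega>
    define r where "r \<omega> = p \<omega> y" for \<omega>
    have [measurable]: "q \<in> borel_measurable M" "r \<in> borel_measurable M"
      unfolding q_def r_def by measurable
    have "distr (density M q) N X = distr (density M r) N X"
    proof (rule measure_eqI)
      fix D assume "D \<in> sets (distr (density M q) N X)"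
      then have [measurable]: "D \<in> sets N" by simp
      have XD: "X -` D \<inter> space M \<in> sets M" by measurable
      have "emeasure (distr (density M q) N X) D = (\<integral>\<^sup>+\<omega>. q \<omega> * indicator (X -` D \<inter> space M) \<omega> \<partial>M)"
        by (simp add: emeasure_distr emeasure_density XD)
      also have "\<dots> = (\<integral>\<^sup>+\<omega>. indicator {\<omega>\<in>space M. X \<omega> \<in> D \<and> Y \<omega> = y} \<omega> \<partial>M)"
        unfolding q_def by (intro nn_integral_cong) (auto split: split_indicator)
      also have "\<dots> = (\<integral>\<^sup>+\<omega>. r \<omega> * indicator {\<omega>\<in>space M. X \<omega> \<in> D} \<omega> \<partial>M)"
        unfolding r_def by (subst nn_integral_indicator) (measurable, rule joint, simp)
      also have "\<dots> = (\<integral>\<^sup>+\<omega>. r \<omega> * indicator (X -` D \<inter> space M) \<omega> \<partial>M)"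
        by (intro nn_integral_cong) (auto split: split_indicator)
      also have "\<dots> = emeasure (distr (density M r) N X) D"
        by (simp add: emeasure_distr emeasure_density XD)
      finally show "emeasure (distr (density M q) N X) D = emeasure (distr (density M r) N X) D" .
    qed simp
    then have "(\<integral>\<^sup>+\<theta>. \<phi> y \<theta> \<partial>distr (density M q) N X) = (\<integral>\<^sup>+\<theta>. \<phi> y \<theta> \<partial>distr (density M r) N X)"
      by simp
    then show ?thesis
      by (simp add: nn_integral_distr nn_integral_density q_def r_def)
  qed
  have "(\<integral>\<^sup>+\<omega>. \<phi> (Y \<omega>) (X \<omega>) \<partial>M)
      = (\<integral>\<^sup>+\<omega>. \<integral>\<^sup>+y. indicator {\<omega>\<in>space M. Y \<omega> = y} \<omega> * \<phi> y (X \<omega>) \<partial>count_space UNIV \<partial>M)"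
    by (intro nn_integral_cong) (simp add: nn_integral_count_space_fiber_indicator)
  also have "\<dots> = (\<integral>\<^sup>+y. \<integral>\<^sup>+\<omega>. p \<omega> y * \<phi> y (X \<omega>) \<partial>M \<partial>count_space UNIV)"
    by (subst nn_integral_count_space_nn_integral) (auto simp: fiber)
  also have "\<dots> = (\<integral>\<^sup>+\<omega>. \<integral>\<^sup>+y. p \<omega> y * \<phi> y (X \<omega>) \<partial>count_space UNIV \<partial>M)"
    by (subst nn_integral_count_space_nn_integral) auto
  finally show ?thesis .
qed

lemma telescoping_with_restarts:
  fixes a b :: "nat \<Rightarrow> real"
  assumes "S 1" and a_le: "\<And>t. 1 \<le> t \<Longrightarrow> a t \<le> H" and b_nonneg: "\<And>t. 1 \<le> t \<Longrightarrow> 0 \<le> b t"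
    and no_restart: "\<And>t. 2 \<le> t \<Longrightarrow> \<not> S t \<Longrightarrow> a t = b (t - 1)"
  shows "(\<Sum>t = 1..T. a t - b t) \<le> H * (\<Sum>t = 1..T. of_bool (S t))"
proof -
  have "(\<Sum>t = 1..T. a t - b t) + b T \<le> H * (\<Sum>t = 1..T. of_bool (S t))" if "1 \<le> T"
    using that
  proof (induction T rule: dec_induct)
    case base
    then show ?case using \<open>S 1\<close> a_le[of 1] by simp
  next
    case (step T)
    have "a (Suc T) - b T \<le> H * of_bool (S (Suc T))"
      using a_le[of "Suc T"] b_nonneg[of T] no_restart[of "Suc T"] step.hyps by (cases "S (Suc T)") auto
    then show ?case
      using step.IH by (simp add: algebra_simps)
  qed
  then show ?thesis
    using b_nonneg[of T] by (cases "T = 0") force+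
qed

lemma exists_last_restart:
  fixes t :: nat
  assumes "S 1" and no_restart: "\<And>t. 2 \<le> t \<Longrightarrow> \<not> S t \<Longrightarrow> f t = f (t - 1)" and "1 \<le> t"
  shows "\<exists>s. 1 \<le> s \<and> S s \<and> f t = f s"
  using \<open>1 \<le> t\<close>
proof (induction t rule: dec_induct)
  case base
  then show ?case using \<open>S 1\<close> by blast
next
  case (step t)
  then show ?case using no_restart[of "Suc t"] by (cases "S (Suc t)") auto
qed

lemma ds_sample_time_1: "ds_sample_time 1"
  unfolding ds_sample_time_def by (metis power_0)

(* The hypotheses of lemma2 without dynamics and bellman_le, which the argument never uses:
   the true transition law enters only through E h_t(x_(t+1)), a term kept in the bound. *)
locale ds_psrl = prob_space M
  for M :: "'w measure" +
  fixes \<Theta> :: "real set"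
    and loss :: "'x::countable \<Rightarrow> 'a::countable \<Rightarrow> real"
    and P :: "'x \<Rightarrow> 'a \<Rightarrow> real \<Rightarrow> 'x pmf"
    and J :: "real \<Rightarrow> real"
    and h :: "'x \<Rightarrow> real \<Rightarrow> real"
    and \<pi> :: "'x \<Rightarrow> real \<Rightarrow> 'a"
    and H :: real
    and thS :: "'w \<Rightarrow> real"
    and th :: "nat \<Rightarrow> 'w \<Rightarrow> real"
    and x :: "nat \<Rightarrow> 'w \<Rightarrow> 'x"
    and xi :: "nat \<Rightarrow> 'w \<Rightarrow> 'x"
  assumes loss_bounded: "\<exists>B. \<forall>s a. \<bar>loss s a\<bar> \<le> B"
    and J_meas: "J \<in> borel_measurable borel"
    and h_meas: "\<And>s. (\<lambda>\<theta>. h s \<theta>) \<in> borel_measurable borel"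
    and P_meas: "\<And>s a y. (\<lambda>\<theta>. pmf (P s a \<theta>) y) \<in> borel_measurable borel"
    and pi_meas: "\<And>s. \<pi> s \<in> borel \<rightarrow>\<^sub>M count_space UNIV"
    and bellman_eq: "\<And>\<theta> s. \<theta> \<in> \<Theta> \<Longrightarrow>
        J \<theta> + h s \<theta> = loss s (\<pi> s \<theta>) + measure_pmf.expectation (P s (\<pi> s \<theta>) \<theta>) (\<lambda>y. h y \<theta>)"
    and h_range: "\<And>s \<theta>. \<theta> \<in> \<Theta> \<Longrightarrow> 0 \<le> h s \<theta> \<and> h s \<theta> \<le> H"
    and thS_meas: "thS \<in> borel_measurable M"
    and thS_in: "\<And>\<omega>. \<omega> \<in> space M \<Longrightarrow> thS \<omega> \<in> \<Theta>"
    and th_meas: "\<And>t. th t \<in> borel_measurable M"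
    and th_in: "\<And>t \<omega>. 1 \<le> t \<Longrightarrow> \<omega> \<in> space M \<Longrightarrow> th t \<omega> \<in> \<Theta>"
    and x_meas: "\<And>t. x t \<in> M \<rightarrow>\<^sub>M count_space UNIV"
    and xi_meas: "\<And>t. xi t \<in> M \<rightarrow>\<^sub>M count_space UNIV"
    and keep: "\<And>t \<omega>. 2 \<le> t \<Longrightarrow> \<not> ds_sample_time t \<Longrightarrow> \<omega> \<in> space M \<Longrightarrow>
        th t \<omega> = th (t - 1) \<omega>"
    and posterior: "\<And>t hs B C. 1 \<le> t \<Longrightarrow> ds_sample_time t \<Longrightarrow> B \<in> sets borel \<Longrightarrow> C \<in> sets borel \<Longrightarrow>
        measure M {\<omega> \<in> space M. th t \<omega> \<in> B \<and> thS \<omega> \<in> C \<and> history \<pi> x th t \<omega> = hs}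
          * measure M {\<omega> \<in> space M. history \<pi> x th t \<omega> = hs}
        = measure M {\<omega> \<in> space M. thS \<omega> \<in> B \<and> history \<pi> x th t \<omega> = hs}
          * measure M {\<omega> \<in> space M. thS \<omega> \<in> C \<and> history \<pi> x th t \<omega> = hs}"
    and imaginary: "\<And>t hs C D y. 1 \<le> t \<Longrightarrow> C \<in> sets borel \<Longrightarrow> D \<in> sets borel \<Longrightarrow>
        measure M {\<omega> \<in> space M. history \<pi> x th t \<omega> = hs \<and> thS \<omega> \<in> C \<and> th t \<omega> \<in> D
                                 \<and> xi t \<omega> = y}
        = (\<integral>\<omega>. indicator {\<omega> \<in> space M. history \<pi> x th t \<omega> = hs \<and> thS \<omega> \<in> C \<and> th t \<omega> \<in> D} \<omega>
               * pmf (P (x t \<omega>) (\<pi> (x t \<omega>) (th t \<omega>)) (th t \<omega>)) y \<partial>M)"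
begin

lemmas [measurable] = J_meas h_meas P_meas pi_meas thS_meas th_meas x_meas xi_meas

abbreviation act :: "nat \<Rightarrow> 'w \<Rightarrow> 'a" where
  "act t \<omega> \<equiv> \<pi> (x t \<omega>) (th t \<omega>)"

abbreviation expected_next_h :: "nat \<Rightarrow> 'w \<Rightarrow> real" where
  "expected_next_h t \<omega> \<equiv> measure_pmf.expectation (P (x t \<omega>) (act t \<omega>) (th t \<omega>)) (\<lambda>y. h y (th t \<omega>))"

lemma measurable_history [measurable]: "(\<lambda>\<omega>. history \<pi> x th t \<omega>) \<in> M \<rightarrow>\<^sub>M count_space UNIV"
  unfolding history_def by measurable

lemma H_nonneg: "0 \<le> H"
proof -
  obtain \<omega> where "\<omega> \<in> space M" using not_empty by blast
  then show ?thesis using h_range[OF thS_in, of \<omega> undefined] by linarith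
qed

lemma integrable_h_sample:
  assumes [measurable]: "X \<in> M \<rightarrow>\<^sub>M count_space UNIV" and "1 \<le> t"
  shows "integrable M (\<lambda>\<omega>. h (X \<omega>) (th t \<omega>))"
  by (rule integrable_const_bound[where B=H]) (use h_range th_in \<open>1 \<le> t\<close> in auto)

lemma expectation_h_bounds:
  assumes "\<theta> \<in> \<Theta>"
  shows "integrable (measure_pmf q) (\<lambda>y. h y \<theta>)"
    and "0 \<le> measure_pmf.expectation q (\<lambda>y. h y \<theta>)" "measure_pmf.expectation q (\<lambda>y. h y \<theta>) \<le> H"
proof -
  show int: "integrable (measure_pmf q) (\<lambda>y. h y \<theta>)"
    by (rule measure_pmf.integrable_const_bound[where B=H]) (use h_range[OF assms] in auto)
  show "0 \<le> measure_pmf.expectation q (\<lambda>y. h y \<theta>)"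
    using h_range[OF assms] by (simp add: integral_nonneg_AE)
  show "measure_pmf.expectation q (\<lambda>y. h y \<theta>) \<le> H"
    using measure_pmf.integral_le_const[OF int, of H] h_range[OF assms] by simp
qed

lemma integrable_J:
  assumes [measurable]: "g \<in> borel_measurable M" and "\<And>\<omega>. \<omega> \<in> space M \<Longrightarrow> g \<omega> \<in> \<Theta>"
  shows "integrable M (\<lambda>\<omega>. J (g \<omega>))"
proof -
  obtain B where B: "\<And>s a. \<bar>loss s a\<bar> \<le> B" using loss_bounded by blast
  have "\<bar>J \<theta>\<bar> \<le> B + 2 * H" if "\<theta> \<in> \<Theta>" for \<theta>
    using bellman_eq[OF that, of undefined] B[of undefined "\<pi> undefined \<theta>"]
      expectation_h_bounds(2,3)[OF that, of "P undefined (\<pi> undefined \<theta>) \<theta>"]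
      h_range[OF that, of undefined] by linarith
  then show ?thesis
    by (intro integrable_const_bound[where B="B + 2 * H"]) (use assms in auto)
qed

lemma expected_next_h_bellman:
  assumes "1 \<le> t" "\<omega> \<in> space M"
  shows "expected_next_h t \<omega> = J (th t \<omega>) + h (x t \<omega>) (th t \<omega>) - loss (x t \<omega>) (act t \<omega>)"
  using bellman_eq[OF th_in[OF assms], of "x t \<omega>"] by simp

lemma measurable_expected_next_h:
  assumes "1 \<le> t"
  shows "expected_next_h t \<in> borel_measurable M"
proof -
  have "(\<lambda>\<omega>. J (th t \<omega>) + h (x t \<omega>) (th t \<omega>) - loss (x t \<omega>) (act t \<omega>)) \<in> borel_measurable M"
    by measurable
  then show ?thesis
    by (rule measurable_cong[THEN iffD1, rotated]) (simp add: expected_next_h_bellman[OF assms])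
qed

lemma distr_sample_eq_prior:
  assumes "1 \<le> s" "ds_sample_time s"
  shows "distr M borel (th s) = distr M borel thS"
proof (rule distr_eq_by_countable_fibers[of "\<lambda>\<omega>. history \<pi> x th s \<omega>"])
  fix c and A :: "real set" assume [measurable]: "A \<in> sets borel"
  have "measure M {\<omega>\<in>space M. th s \<omega> \<in> A \<and> history \<pi> x th s \<omega> = c}
      = measure M {\<omega>\<in>space M. thS \<omega> \<in> A \<and> history \<pi> x th s \<omega> = c}"
    by (rule measure_eq_if_mult_eq[where F="{\<omega>\<in>space M. history \<pi> x th s \<omega> = c}"])
       (use posterior[OF assms, of A UNIV c] in auto)
  then show "emeasure M {\<omega>\<in>space M. th s \<omega> \<in> A \<and> history \<pi> x th s \<omega> = c}
      = emeasure M {\<omega>\<in>space M. thS \<omega> \<in> A \<and> history \<pi> x th s \<omega> = c}"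
    by (simp add: emeasure_eq_measure)
qed measurable

lemma expectation_J_sample:
  assumes "1 \<le> t"
  shows "(\<integral>\<omega>. J (th t \<omega>) \<partial>M) = (\<integral>\<omega>. J (thS \<omega>) \<partial>M)"
proof -
  obtain s where s: "1 \<le> s" "ds_sample_time s" "restrict (th t) (space M) = restrict (th s) (space M)"
    using ds_sample_time_1 exists_last_restart[of ds_sample_time "\<lambda>t. restrict (th t) (space M)"] keep assms
    by (metis restrict_ext)
  have "th t \<omega> = th s \<omega>" if "\<omega> \<in> space M" for \<omega>
    using fun_cong[OF s(3), of \<omega>] that by simp
  then have "(\<integral>\<omega>. J (th t \<omega>) \<partial>M) = (\<integral>\<omega>. J (th s \<omega>) \<partial>M)"
    by (intro Bochner_Integration.integral_cong) auto
  also have "\<dots> = integral\<^sup>L (distr M borel (th s)) J"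
    by (simp add: integral_distr)
  also have "\<dots> = (\<integral>\<omega>. J (thS \<omega>) \<partial>M)"
    by (simp add: distr_sample_eq_prior[OF s(1,2)] integral_distr)
  finally show ?thesis .
qed

lemma expectation_expected_next_h:
  assumes "1 \<le> t"
  shows "(\<integral>\<omega>. expected_next_h t \<omega> \<partial>M) = (\<integral>\<omega>. h (xi t \<omega>) (th t \<omega>) \<partial>M)"
proof -
  have "(\<integral>\<^sup>+\<omega>. ennreal (h (xi t \<omega>) (th t \<omega>)) \<partial>M)
      = (\<integral>\<^sup>+\<omega>. \<integral>\<^sup>+y. ennreal (pmf (P (x t \<omega>) (act t \<omega>) (th t \<omega>)) y) * ennreal (h y (th t \<omega>))
           \<partial>count_space UNIV \<partial>M)"
  proof (rule nn_integral_cond_pmf[where X="th t" and Y="xi t" and N=borel and \<phi>="\<lambda>y \<theta>. ennreal (h y \<theta>)"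
        and p="\<lambda>\<omega> y. ennreal (pmf (P (x t \<omega>) (act t \<omega>) (th t \<omega>)) y)"])
    fix D :: "real set" and y assume D [measurable]: "D \<in> sets borel"
    show "emeasure M {\<omega>\<in>space M. th t \<omega> \<in> D \<and> xi t \<omega> = y}
      = (\<integral>\<^sup>+\<omega>. ennreal (pmf (P (x t \<omega>) (act t \<omega>) (th t \<omega>)) y) * indicator {\<omega>\<in>space M. th t \<omega> \<in> D} \<omega> \<partial>M)"
      by (rule emeasure_eq_nn_integral_by_countable_fibers[of "\<lambda>\<omega>. history \<pi> x th t \<omega>"])
         (use imaginary[OF assms _ D, of UNIV] in \<open>auto simp: pmf_le_1\<close>)
  qed measurable
  also have "\<dots> = (\<integral>\<^sup>+\<omega>. ennreal (expected_next_h t \<omega>) \<partial>M)"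
  proof (rule nn_integral_cong)
    fix \<omega> assume "\<omega> \<in> space M"
    then have \<theta>: "th t \<omega> \<in> \<Theta>" using th_in assms by blast
    let ?q = "P (x t \<omega>) (act t \<omega>) (th t \<omega>)"
    have "(\<integral>\<^sup>+y. ennreal (pmf ?q y) * ennreal (h y (th t \<omega>)) \<partial>count_space UNIV)
        = (\<integral>\<^sup>+y. ennreal (h y (th t \<omega>)) \<partial>measure_pmf ?q)"
      by (rule nn_integral_measure_pmf[symmetric])
    also have "\<dots> = ennreal (expected_next_h t \<omega>)"
      by (rule nn_integral_eq_integral[OF expectation_h_bounds(1)[OF \<theta>]]) (use h_range[OF \<theta>] in auto)
    finally show "(\<integral>\<^sup>+y. ennreal (pmf ?q y) * ennreal (h y (th t \<omega>)) \<partial>count_space UNIV)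
        = ennreal (expected_next_h t \<omega>)" .
  qed
  finally have nn_eq: "(\<integral>\<^sup>+\<omega>. ennreal (h (xi t \<omega>) (th t \<omega>)) \<partial>M)
      = (\<integral>\<^sup>+\<omega>. ennreal (expected_next_h t \<omega>) \<partial>M)" .
  have "(\<integral>\<omega>. expected_next_h t \<omega> \<partial>M) = enn2real (\<integral>\<^sup>+\<omega>. ennreal (expected_next_h t \<omega>) \<partial>M)"
    by (rule integral_eq_nn_integral[OF measurable_expected_next_h[OF assms] AE_I2])
       (use expectation_h_bounds(2) th_in assms in blast)
  also have "\<dots> = (\<integral>\<omega>. h (xi t \<omega>) (th t \<omega>) \<partial>M)"
    unfolding nn_eq[symmetric]
    by (rule integral_eq_nn_integral[symmetric, OF _ AE_I2]) (use h_range th_in assms in auto)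
  finally show ?thesis .
qed


lemma expectation_regret_step:
  assumes "1 \<le> t"
  shows "(\<integral>\<omega>. loss (x t \<omega>) (act t \<omega>) - J (thS \<omega>) \<partial>M)
    = ((\<integral>\<omega>. h (x t \<omega>) (th t \<omega>) \<partial>M) - (\<integral>\<omega>. h (x (Suc t) \<omega>) (th t \<omega>) \<partial>M))
      + (\<integral>\<omega>. h (x (Suc t) \<omega>) (th t \<omega>) - h (xi t \<omega>) (th t \<omega>) \<partial>M)"
proof -
  have int_next: "integrable M (\<lambda>\<omega>. expected_next_h t \<omega>)"
    by (rule integrable_const_bound[where B=H, OF _ measurable_expected_next_h[OF assms]])
       (use expectation_h_bounds(2,3) th_in assms in force)
  have "(\<integral>\<omega>. loss (x t \<omega>) (act t \<omega>) - J (thS \<omega>) \<partial>M)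
      = (\<integral>\<omega>. (J (th t \<omega>) - J (thS \<omega>)) + (h (x t \<omega>) (th t \<omega>) - expected_next_h t \<omega>) \<partial>M)"
    using expected_next_h_bellman[OF assms] by (intro Bochner_Integration.integral_cong) auto
  also have "\<dots> = ((\<integral>\<omega>. J (th t \<omega>) \<partial>M) - (\<integral>\<omega>. J (thS \<omega>) \<partial>M))
      + ((\<integral>\<omega>. h (x t \<omega>) (th t \<omega>) \<partial>M) - (\<integral>\<omega>. expected_next_h t \<omega> \<partial>M))"
    using integrable_J[OF th_meas th_in[OF assms]] integrable_J[OF thS_meas thS_in]
      integrable_h_sample[OF x_meas assms] int_next by simp
  also have "\<dots> = (\<integral>\<omega>. h (x t \<omega>) (th t \<omega>) \<partial>M) - (\<integral>\<omega>. h (xi t \<omega>) (th t \<omega>) \<partial>M)"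
    by (simp add: expectation_J_sample[OF assms] expectation_expected_next_h[OF assms])
  also have "\<dots> = ((\<integral>\<omega>. h (x t \<omega>) (th t \<omega>) \<partial>M) - (\<integral>\<omega>. h (x (Suc t) \<omega>) (th t \<omega>) \<partial>M))
      + (\<integral>\<omega>. h (x (Suc t) \<omega>) (th t \<omega>) - h (xi t \<omega>) (th t \<omega>) \<partial>M)"
    using integrable_h_sample[OF x_meas assms] integrable_h_sample[OF xi_meas assms] by simp
  finally show ?thesis .
qed

lemma sum_expected_h_decrease_le:
  "(\<Sum>t = 1..T. (\<integral>\<omega>. h (x t \<omega>) (th t \<omega>) \<partial>M) - (\<integral>\<omega>. h (x (Suc t) \<omega>) (th t \<omega>) \<partial>M))
    \<le> H * (\<Sum>t = 1..T. of_bool (ds_sample_time t))"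
proof (rule telescoping_with_restarts[where S=ds_sample_time, OF ds_sample_time_1])
  fix t :: nat assume "1 \<le> t"
  then show "(\<integral>\<omega>. h (x t \<omega>) (th t \<omega>) \<partial>M) \<le> H"
    "0 \<le> (\<integral>\<omega>. h (x (Suc t) \<omega>) (th t \<omega>) \<partial>M)"
    using h_range th_in
    by (auto intro!: integral_le_const integrable_h_sample integral_nonneg_AE)
next
  fix t :: nat assume "2 \<le> t" "\<not> ds_sample_time t"
  then show "(\<integral>\<omega>. h (x t \<omega>) (th t \<omega>) \<partial>M) = (\<integral>\<omega>. h (x (Suc (t - 1)) \<omega>) (th (t - 1) \<omega>) \<partial>M)"
    using keep by (auto intro!: Bochner_Integration.integral_cong)
qed

lemma expectation_policy_change:
  "(\<integral>\<omega>. indicator (policy_change_event M t) \<omega> \<partial>M) = (of_bool (ds_sample_time t) :: real)"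
  by (cases "ds_sample_time t") (simp_all add: policy_change_event_def prob_space)

end

theorem lemma2:
  fixes M :: "'w measure"
    and \<Theta> :: "real set"
    and loss :: "'x::countable \<Rightarrow> 'a::countable \<Rightarrow> real"
    and P :: "'x \<Rightarrow> 'a \<Rightarrow> real \<Rightarrow> 'x pmf"
    and J :: "real \<Rightarrow> real"
    and h :: "'x \<Rightarrow> real \<Rightarrow> real"
    and \<pi> :: "'x \<Rightarrow> real \<Rightarrow> 'a"
    and H :: real
    and thS :: "'w \<Rightarrow> real"
    and th :: "nat \<Rightarrow> 'w \<Rightarrow> real"
    and x :: "nat \<Rightarrow> 'w \<Rightarrow> 'x"
    and xi :: "nat \<Rightarrow> 'w \<Rightarrow> 'x"
    and T :: nat
  assumes prob: "prob_space M"
    \<comment> \<open>regularity of the model\<close>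
    and loss_bounded: "\<exists>B. \<forall>s a. \<bar>loss s a\<bar> \<le> B"
    and J_meas: "J \<in> borel_measurable borel"
    and h_meas: "\<And>s. (\<lambda>\<theta>. h s \<theta>) \<in> borel_measurable borel"
    and P_meas: "\<And>s a y. (\<lambda>\<theta>. pmf (P s a \<theta>) y) \<in> borel_measurable borel"
    and pi_meas: "\<And>s. \<pi> s \<in> borel \<rightarrow>\<^sub>M count_space UNIV"
    \<comment> \<open>Bellman equation; pi attains the minimum\<close>
    and bellman_le: "\<And>\<theta> s a. \<theta> \<in> \<Theta> \<Longrightarrow>
        J \<theta> + h s \<theta> \<le> loss s a + measure_pmf.expectation (P s a \<theta>) (\<lambda>y. h y \<theta>)"
    and bellman_eq: "\<And>\<theta> s. \<theta> \<in> \<Theta> \<Longrightarrow>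
        J \<theta> + h s \<theta> = loss s (\<pi> s \<theta>) + measure_pmf.expectation (P s (\<pi> s \<theta>) \<theta>) (\<lambda>y. h y \<theta>)"
    \<comment> \<open>span bound\<close>
    and h_range: "\<And>s \<theta>. \<theta> \<in> \<Theta> \<Longrightarrow> 0 \<le> h s \<theta> \<and> h s \<theta> \<le> H"
    \<comment> \<open>random variables\<close>
    and thS_meas: "thS \<in> borel_measurable M"
    and thS_in: "\<And>\<omega>. \<omega> \<in> space M \<Longrightarrow> thS \<omega> \<in> \<Theta>"
    and th_meas: "\<And>t. th t \<in> borel_measurable M"
    and th_in: "\<And>t \<omega>. 1 \<le> t \<Longrightarrow> \<omega> \<in> space M \<Longrightarrow> th t \<omega> \<in> \<Theta>"
    and x_meas: "\<And>t. x t \<in> M \<rightarrow>\<^sub>M count_space UNIV"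
    and xi_meas: "\<And>t. xi t \<in> M \<rightarrow>\<^sub>M count_space UNIV"
    \<comment> \<open>DS-PSRL: keep the sample between sampling times\<close>
    and keep: "\<And>t \<omega>. 2 \<le> t \<Longrightarrow> \<not> ds_sample_time t \<Longrightarrow> \<omega> \<in> space M \<Longrightarrow>
        th t \<omega> = th (t - 1) \<omega>"
    \<comment> \<open>DS-PSRL: at sampling times, th t is drawn from the posterior of thS given the
        observed history (conditionally independent of thS, with the posterior law)\<close>
    and posterior: "\<And>t hs B C. 1 \<le> t \<Longrightarrow> ds_sample_time t \<Longrightarrow> B \<in> sets borel \<Longrightarrow> C \<in> sets borel \<Longrightarrow>
        measure M {\<omega> \<in> space M. th t \<omega> \<in> B \<and> thS \<omega> \<in> C \<and> history \<pi> x th t \<omega> = hs}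
          * measure M {\<omega> \<in> space M. history \<pi> x th t \<omega> = hs}
        = measure M {\<omega> \<in> space M. thS \<omega> \<in> B \<and> history \<pi> x th t \<omega> = hs}
          * measure M {\<omega> \<in> space M. thS \<omega> \<in> C \<and> history \<pi> x th t \<omega> = hs}"
    \<comment> \<open>true dynamics: x (t+1) ~ P(. | x t, a t, thS) given the past\<close>
    and dynamics: "\<And>t hs C D y. 1 \<le> t \<Longrightarrow> C \<in> sets borel \<Longrightarrow> D \<in> sets borel \<Longrightarrow>
        measure M {\<omega> \<in> space M. history \<pi> x th t \<omega> = hs \<and> thS \<omega> \<in> C \<and> th t \<omega> \<in> D
                                 \<and> x (Suc t) \<omega> = y}
        = (\<integral>\<omega>. indicator {\<omega> \<in> space M. history \<pi> x th t \<omega> = hs \<and> thS \<omega> \<in> C \<and> th t \<omega> \<in> D} \<omega>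
               * pmf (P (x t \<omega>) (\<pi> (x t \<omega>) (th t \<omega>)) (thS \<omega>)) y \<partial>M)"
    \<comment> \<open>imaginary next state: xi t ~ P(. | x t, a t, th t) given the past\<close>
    and imaginary: "\<And>t hs C D y. 1 \<le> t \<Longrightarrow> C \<in> sets borel \<Longrightarrow> D \<in> sets borel \<Longrightarrow>
        measure M {\<omega> \<in> space M. history \<pi> x th t \<omega> = hs \<and> thS \<omega> \<in> C \<and> th t \<omega> \<in> D
                                 \<and> xi t \<omega> = y}
        = (\<integral>\<omega>. indicator {\<omega> \<in> space M. history \<pi> x th t \<omega> = hs \<and> thS \<omega> \<in> C \<and> th t \<omega> \<in> D} \<omega>
               * pmf (P (x t \<omega>) (\<pi> (x t \<omega>) (th t \<omega>)) (th t \<omega>)) y \<partial>M)"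
  shows "(\<Sum>t = 1..T. (\<integral>\<omega>. loss (x t \<omega>) (\<pi> (x t \<omega>) (th t \<omega>)) - J (thS \<omega>) \<partial>M))
         \<le> H * (\<Sum>t = 1..T. (\<integral>\<omega>. indicator (policy_change_event M t) \<omega> \<partial>M))
           + (\<Sum>t = 1..T. (\<integral>\<omega>. h (x (Suc t) \<omega>) (th t \<omega>) - h (xi t \<omega>) (th t \<omega>) \<partial>M))
           + H"
proof -
  interpret ds_psrl M \<Theta> loss P J h \<pi> H thS th x xi
    by (intro ds_psrl.intro ds_psrl_axioms.intro) (fact assms)+
  have "(\<Sum>t = 1..T. (\<integral>\<omega>. loss (x t \<omega>) (\<pi> (x t \<omega>) (th t \<omega>)) - J (thS \<omega>) \<partial>M))
      = (\<Sum>t = 1..T. (\<integral>\<omega>. h (x t \<omega>) (th t \<omega>) \<partial>M) - (\<integral>\<omega>. h (x (Suc t) \<omega>) (th t \<omega>) \<partial>M))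
        + (\<Sum>t = 1..T. (\<integral>\<omega>. h (x (Suc t) \<omega>) (th t \<omega>) - h (xi t \<omega>) (th t \<omega>) \<partial>M))"
    by (simp add: expectation_regret_step sum.distrib)
  also have "(\<Sum>t = 1..T. (\<integral>\<omega>. h (x t \<omega>) (th t \<omega>) \<partial>M) - (\<integral>\<omega>. h (x (Suc t) \<omega>) (th t \<omega>) \<partial>M))
      \<le> H * (\<Sum>t = 1..T. of_bool (ds_sample_time t))"
    by (rule sum_expected_h_decrease_le)
  \<comment> \<open>The summand \<open>H\<close> of the statement is slack: \<open>t = 1\<close> is a sampling time.\<close>
  finally show ?thesis
    unfolding expectation_policy_change using H_nonneg by linarith
qed

end
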